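(* Let $(\mathcal{S},\mathcal{A},\tau,\mu_0,\gamma)$ be fixed and $\beta>0$. For a reward function $R$, let $\preceq^{\zeta}_{\beta,R}$ denote the family of probabilities $\mathbb{P}_R(\zeta_1\preceq\zeta_2)=\exp(\beta G_R(\zeta_2))/(\exp(\beta G_R(\zeta_1))+\exp(\beta G_R(\zeta_2)))$ indexed by all pairs $(\zeta_1,\zeta_2)$ of possible trajectory fragments (of any lengths $\ge0$). Then for reward functions $R,R'$: $\preceq^{\zeta}_{\beta,R}=\preceq^{\zeta}_{\beta,R'}$ if and only if $R'$ is produced from $R$ by a mask of impossible transitions, i.e. $R(x)=R'(x)$ for all possible transitions $x$.
   Context: An MDP is $(\mathcal{S},\mathcal{A},\tau,\mu_0,R,\gamma)$ with finite $\mathcal{S},\mathcal{A}$, $\tau:\mathcal{S}\times\mathcal{A}\to\Delta(\mathcal{S})$, $\mu_0\in\Delta(\mathcal{S})$, $R:\mathcal{S}\times\mathcal{A}\times\mathcal{S}\to\mathbb{R}$, $\gamma\in(0,1)$. A transition $(s,a,s')$ is possible if $\tau(s'\mid s,a)>0$, impossible otherwise. A trajectory fragment of length $n$ is $(s_0,a_0,s_1,\dots,a_{n-1},s_n)$, possible if all its transitions are possible, with return $G(\zeta)=\sum_{t=0}^{n-1}\gamma^tR(s_t,a_t,s_{t+1})$. *)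

theory Defs
  imports "HOL-Probability.Probability_Mass_Function"
begin

text \<open>A trajectory fragment
(s0,a0,s1,...,a_{n-1},s_n) is represented as a start state s0 together with the
list [(a0,s1),...,(a_{n-1},s_n)]; length n = length of the list (n >= 0).\<close>

definition possible_transition :: "('s \<Rightarrow> 'a \<Rightarrow> 's pmf) \<Rightarrow> 's \<Rightarrow> 'a \<Rightarrow> 's \<Rightarrow> bool" where
  "possible_transition \<tau> s a s' \<longleftrightarrow> pmf (\<tau> s a) s' > 0"

fun possible_frag :: "('s \<Rightarrow> 'a \<Rightarrow> 's pmf) \<Rightarrow> 's \<Rightarrow> ('a \<times> 's) list \<Rightarrow> bool" where
  "possible_frag \<tau> s [] = True"
| "possible_frag \<tau> s ((a, s') # xs) = (possible_transition \<tau> s a s' \<and> possible_frag \<tau> s' xs)"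

fun frag_return :: "real \<Rightarrow> ('s \<Rightarrow> 'a \<Rightarrow> 's \<Rightarrow> real) \<Rightarrow> 's \<Rightarrow> ('a \<times> 's) list \<Rightarrow> real" where
  "frag_return \<gamma> R s [] = 0"
| "frag_return \<gamma> R s ((a, s') # xs) = R s a s' + \<gamma> * frag_return \<gamma> R s' xs"

definition pref_prob :: "real \<Rightarrow> real \<Rightarrow> ('s \<Rightarrow> 'a \<Rightarrow> 's \<Rightarrow> real) \<Rightarrow>
    ('s \<times> ('a \<times> 's) list) \<Rightarrow> ('s \<times> ('a \<times> 's) list) \<Rightarrow> real" where
  "pref_prob \<beta> \<gamma> R z1 z2 =
     exp (\<beta> * frag_return \<gamma> R (fst z2) (snd z2)) /
     (exp (\<beta> * frag_return \<gamma> R (fst z1) (snd z1)) + exp (\<beta> * frag_return \<gamma> R (fst z2) (snd z2)))"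

end

theory Submission
  imports Defs
begin

text \<open>The return of a possible fragment only involves R on possible transitions, which gives
one direction. Conversely, comparing the empty fragment at s with the one-step fragment
(s, a, s') yields the preference probability exp (\<beta> r) / (1 + exp (\<beta> r)) with r = R s a s';
this is injective in r since \<beta> \<noteq> 0.\<close>

lemma frag_return_cong_possible:
  assumes "\<And>s a s'. possible_transition \<tau> s a s' \<Longrightarrow> R s a s' = R' s a s'"
    and "possible_frag \<tau> s xs"
  shows "frag_return \<gamma> R s xs = frag_return \<gamma> R' s xs"
  using assms(2) by (induction xs arbitrary: s) (auto simp: assms(1))

lemma pref_prob_empty_single:
  "pref_prob \<beta> \<gamma> R (s, []) (s, [(a, s')]) = exp (\<beta> * R s a s') / (1 + exp (\<beta> * R s a s'))"
  by (simp add: pref_prob_def)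

lemma exp_div_one_plus_exp_eq_iff:
  fixes x y :: real
  shows "exp x / (1 + exp x) = exp y / (1 + exp y) \<longleftrightarrow> x = y"
proof
  assume "exp x / (1 + exp x) = exp y / (1 + exp y)"
  then have "exp x * (1 + exp y) = exp y * (1 + exp x)"
    by (simp add: frac_eq_eq add_pos_pos[THEN less_imp_neq, symmetric] mult.commute)
  then show "x = y"
    by (simp add: algebra_simps)
qed simp

theorem theorem3p11:
  fixes \<tau> :: "'s::finite \<Rightarrow> 'a::finite \<Rightarrow> 's pmf"
    and \<mu>0 :: "'s pmf"
    and \<gamma> \<beta> :: real
    and R R' :: "'s \<Rightarrow> 'a \<Rightarrow> 's \<Rightarrow> real"
  assumes "0 < \<gamma>" and "\<gamma> < 1" and "0 < \<beta>"
  shows "(\<forall>z1 z2. possible_frag \<tau> (fst z1) (snd z1) \<longrightarrow> possible_frag \<tau> (fst z2) (snd z2) \<longrightarrow>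
            pref_prob \<beta> \<gamma> R z1 z2 = pref_prob \<beta> \<gamma> R' z1 z2)
         \<longleftrightarrow> (\<forall>s a s'. possible_transition \<tau> s a s' \<longrightarrow> R s a s' = R' s a s')"
proof
  assume same_prefs: "\<forall>z1 z2. possible_frag \<tau> (fst z1) (snd z1) \<longrightarrow>
      possible_frag \<tau> (fst z2) (snd z2) \<longrightarrow> pref_prob \<beta> \<gamma> R z1 z2 = pref_prob \<beta> \<gamma> R' z1 z2"
  show "\<forall>s a s'. possible_transition \<tau> s a s' \<longrightarrow> R s a s' = R' s a s'"
  proof (intro allI impI)
    fix s a s'
    assume "possible_transition \<tau> s a s'"
    then have "pref_prob \<beta> \<gamma> R (s, []) (s, [(a, s')]) = pref_prob \<beta> \<gamma> R' (s, []) (s, [(a, s')])"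
      using same_prefs by auto
    then have "\<beta> * R s a s' = \<beta> * R' s a s'"
      by (simp only: pref_prob_empty_single exp_div_one_plus_exp_eq_iff)
    then show "R s a s' = R' s a s'"
      using \<open>0 < \<beta>\<close> by simp
  qed
next
  assume "\<forall>s a s'. possible_transition \<tau> s a s' \<longrightarrow> R s a s' = R' s a s'"
  then show "\<forall>z1 z2. possible_frag \<tau> (fst z1) (snd z1) \<longrightarrow> possible_frag \<tau> (fst z2) (snd z2) \<longrightarrow>
      pref_prob \<beta> \<gamma> R z1 z2 = pref_prob \<beta> \<gamma> R' z1 z2"
    using frag_return_cong_possible[of \<tau> R R'] by (simp add: pref_prob_def)
qed

end
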